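(* For every time step $\Delta t>0$ and every mesh, let $(\phi_h^n,\psi_h^n,s_h^n)_{n\ge0}$ with $\phi_h^n,\psi_h^n\in V_h$, $s_h^n\in\mathbb R$, satisfy, for all $n\ge 0$ and all $v_h\in V_h$, $$\Big(\tfrac{\phi_h^{n+1}-\phi_h^n}{\Delta t},v_h\Big)=-\Big\{\xi^2(\psi_h^{n+1},v_h)-\xi^2(\nabla\psi_h^{n+1},\nabla v_h)+(u(\phi_h^n),v_h)\,s_h^{n+1}\Big\},$$ $$(\psi_h^{n},v_h)=(\phi_h^{n},v_h)-(\nabla\phi_h^{n},\nabla v_h)\quad(\text{for all }n\ge0),$$ $$s_h^{n+1}-s_h^n=\tfrac12\big(u(\phi_h^n),\phi_h^{n+1}-\phi_h^n\big).$$ Then with the modified energy $\tilde{\mathcal E}(\psi,s):=\frac{\xi^2}{2}\|\psi\|^2+s^2$ one has, for all $n\ge0$, $$\tilde{\mathcal E}(\psi_h^{n+1},s_h^{n+1})-\tilde{\mathcal E}(\psi_h^{n},s_h^{n})=-\Big\{\tfrac1{\Delta t}\|\phi_h^{n+1}-\phi_h^n\|^2+\tfrac{\xi^2}{2}\|\psi_h^{n+1}-\psi_h^n\|^2+(s_h^{n+1}-s_h^n)^2\Big\}\le0,$$ i.e. the scheme is unconditionally energy stable with respect to $\tilde{\mathcal E}$.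
   Context: $\Omega\subset\mathbb R^2$ is a bounded convex domain with Lipschitz boundary; $(\cdot,\cdot)$ and $\|\cdot\|$ denote the $L^2(\Omega)$ inner product and norm. $\xi,\alpha,\gamma$ are real parameters, $\mathcal N(\phi)=\frac{\alpha}{2}\phi^2-\frac{\gamma}{6}\phi^3+\frac{1}{24}\phi^4$, $\mathcal E_1(\phi)=\int_\Omega\mathcal N(\phi)\,d\mathbf r$, $D_0$ is a constant with $\mathcal E_1(\phi)+D_0>0$ for the arguments considered, and $u(\phi):=\mathcal N'(\phi)/\sqrt{\mathcal E_1(\phi)+D_0}$. $\mathcal T_h$ is a conforming triangulation of $\Omega$ and $V_h=\{w\in H^1(\Omega): w|_\tau\in P_1(\tau)\ \forall\tau\in\mathcal T_h\}$ is the continuous piecewise linear finite element space. *)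

theory Defs
  imports "HOL-Analysis.Analysis"
begin

type_synonym pt = "real ^ 2"

text \<open>A conforming triangulation of the domain \<Omega>: a finite set of triangles, each given
by its set of three affinely independent vertices; the closed triangles cover the closure of
\<Omega>, and two distinct triangles meet in the convex hull of a set of common vertices
(i.e. in nothing, a common vertex, or a common edge).\<close>
definition conforming_triangulation :: "pt set \<Rightarrow> pt set set \<Rightarrow> bool" where
  "conforming_triangulation \<Omega> T \<longleftrightarrow>
     finite T \<and>
     (\<forall>\<tau>\<in>T. card \<tau> = 3 \<and> \<not> affine_dependent \<tau>) \<and>
     \<Union>((\<lambda>\<tau>. convex hull \<tau>) ` T) = closure \<Omega> \<and>
     (\<forall>\<tau>1\<in>T. \<forall>\<tau>2\<in>T. \<tau>1 \<noteq> \<tau>2 \<longrightarrow>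
        (\<exists>S. S \<subseteq> \<tau>1 \<inter> \<tau>2 \<and> (convex hull \<tau>1) \<inter> (convex hull \<tau>2) = convex hull S))"

text \<open>Continuous piecewise linear finite element space V_h (values outside the closure of
\<Omega> are irrelevant).\<close>
definition Vh :: "pt set \<Rightarrow> pt set set \<Rightarrow> (pt \<Rightarrow> real) set" where
  "Vh \<Omega> T = {w. continuous_on (closure \<Omega>) w \<and>
     (\<forall>\<tau>\<in>T. \<exists>a b. \<forall>x\<in>convex hull \<tau>. w x = a \<bullet> x + b)}"

text \<open>(Classical) gradient; for w in V_h it exists off the (null) set of triangle edges.\<close>
definition grad :: "(pt \<Rightarrow> real) \<Rightarrow> pt \<Rightarrow> pt" where
  "grad w x = (SOME g. (w has_derivative (\<lambda>h. g \<bullet> h)) (at x))"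

definition l2ip :: "pt set \<Rightarrow> (pt \<Rightarrow> real) \<Rightarrow> (pt \<Rightarrow> real) \<Rightarrow> real" where
  "l2ip \<Omega> f g = integral \<Omega> (\<lambda>x. f x * g x)"

definition l2norm :: "pt set \<Rightarrow> (pt \<Rightarrow> real) \<Rightarrow> real" where
  "l2norm \<Omega> f = sqrt (l2ip \<Omega> f f)"

definition l2ip_grad :: "pt set \<Rightarrow> (pt \<Rightarrow> real) \<Rightarrow> (pt \<Rightarrow> real) \<Rightarrow> real" where
  "l2ip_grad \<Omega> f g = integral \<Omega> (\<lambda>x. grad f x \<bullet> grad g x)"

definition Nfun :: "real \<Rightarrow> real \<Rightarrow> real \<Rightarrow> real" where
  "Nfun \<alpha> \<gamma> p = \<alpha> / 2 * p ^ 2 - \<gamma> / 6 * p ^ 3 + 1 / 24 * p ^ 4"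

definition Nderiv :: "real \<Rightarrow> real \<Rightarrow> real \<Rightarrow> real" where
  "Nderiv \<alpha> \<gamma> p = \<alpha> * p - \<gamma> / 2 * p ^ 2 + 1 / 6 * p ^ 3"

definition E1 :: "pt set \<Rightarrow> real \<Rightarrow> real \<Rightarrow> (pt \<Rightarrow> real) \<Rightarrow> real" where
  "E1 \<Omega> \<alpha> \<gamma> \<phi> = integral \<Omega> (\<lambda>x. Nfun \<alpha> \<gamma> (\<phi> x))"

definition ufun :: "pt set \<Rightarrow> real \<Rightarrow> real \<Rightarrow> real \<Rightarrow> (pt \<Rightarrow> real) \<Rightarrow> pt \<Rightarrow> real" where
  "ufun \<Omega> \<alpha> \<gamma> D0 \<phi> = (\<lambda>x. Nderiv \<alpha> \<gamma> (\<phi> x) / sqrt (E1 \<Omega> \<alpha> \<gamma> \<phi> + D0))"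

definition mod_energy :: "pt set \<Rightarrow> real \<Rightarrow> (pt \<Rightarrow> real) \<Rightarrow> real \<Rightarrow> real" where
  "mod_energy \<Omega> \<xi> \<psi> s = \<xi> ^ 2 / 2 * (l2norm \<Omega> \<psi>) ^ 2 + s ^ 2"

end

theory Submission imports Defs begin

text \<open>Test the first equation with \<open>v = \<phi>(n+1) - \<phi>(n)\<close> and the second one, at levels
\<open>n+1\<close> and \<open>n\<close>, with \<open>v = \<psi>(n+1)\<close>: the gradient terms cancel and
\<open>\<xi>\<^sup>2 ((\<psi>(n+1), \<psi>(n+1)) - (\<psi>(n), \<psi>(n+1)))\<close> remains, while the third equation turns the
nonlinear term into \<open>2 (s(n+1) - s(n)) s(n+1)\<close>. The identity \<open>2 b (b - a) = b\<^sup>2 - a\<^sup>2 + (b - a)\<^sup>2\<close>,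
in \<open>L\<^sup>2\<close> and in \<open>\<real>\<close>, then gives the energy law. The analytic input is the bilinearity of
both inner products on \<open>V\<^sub>h\<close>: the gradient of a \<open>V\<^sub>h\<close> function is constant on each open
triangle, hence off the negligible union of the triangle boundaries.\<close>

lemma Vh_affine_pieces:
  assumes "h \<in> Vh \<Omega> T"
  obtains A B where "\<forall>\<tau>\<in>T. \<forall>x\<in>convex hull \<tau>. h x = A \<tau> \<bullet> x + B \<tau>"
proof -
  have "\<forall>\<tau>\<in>T. \<exists>a b. \<forall>x\<in>convex hull \<tau>. h x = a \<bullet> x + b"
    using assms by (simp add: Vh_def)
  then have "\<forall>\<tau>\<in>T. \<exists>ab. \<forall>x\<in>convex hull \<tau>. h x = fst ab \<bullet> x + snd ab"
    by simp
  from bchoice[OF this] obtain AB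
    where "\<forall>\<tau>\<in>T. \<forall>x\<in>convex hull \<tau>. h x = fst (AB \<tau>) \<bullet> x + snd (AB \<tau>)" ..
  then show thesis by (rule that)
qed

lemma Vh_diff:
  assumes "f \<in> Vh \<Omega> T" "g \<in> Vh \<Omega> T"
  shows "(\<lambda>x. f x - g x) \<in> Vh \<Omega> T"
proof -
  obtain A B where f: "\<forall>\<tau>\<in>T. \<forall>x\<in>convex hull \<tau>. f x = A \<tau> \<bullet> x + B \<tau>"
    using Vh_affine_pieces[OF assms(1)] .
  obtain C D where g: "\<forall>\<tau>\<in>T. \<forall>x\<in>convex hull \<tau>. g x = C \<tau> \<bullet> x + D \<tau>"
    using Vh_affine_pieces[OF assms(2)] .
  have "\<forall>\<tau>\<in>T. \<exists>a b. \<forall>x\<in>convex hull \<tau>. f x - g x = a \<bullet> x + b"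
  proof
    fix \<tau> assume "\<tau> \<in> T"
    then have "\<forall>x\<in>convex hull \<tau>. f x - g x = (A \<tau> - C \<tau>) \<bullet> x + (B \<tau> - D \<tau>)"
      using f g by (simp add: inner_diff_left)
    then show "\<exists>a b. \<forall>x\<in>convex hull \<tau>. f x - g x = a \<bullet> x + b" by blast
  qed
  moreover have "continuous_on (closure \<Omega>) (\<lambda>x. f x - g x)"
    using assms by (auto simp: Vh_def intro!: continuous_on_diff)
  ultimately show ?thesis by (simp add: Vh_def)
qed

lemma integrable_on_bounded_continuous:
  fixes h :: "'a::euclidean_space \<Rightarrow> real"
  assumes "S \<in> sets lebesgue" "bounded S" "continuous_on S h" "\<And>x. x \<in> S \<Longrightarrow> \<bar>h x\<bar> \<le> M"
  shows "h integrable_on S"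
proof -
  have "(\<lambda>x. M) integrable_on S"
    using assms by (simp add: bounded_set_imp_lmeasurable integrable_on_const)
  moreover have "h \<in> borel_measurable (lebesgue_on S)"
    using assms by (simp add: continuous_imp_measurable_on_sets_lebesgue)
  ultimately have "h absolutely_integrable_on S"
    using assms by (intro measurable_bounded_by_integrable_imp_absolutely_integrable) auto
  then show ?thesis using absolutely_integrable_on_def by blast
qed

lemma integrable_on_piecewise_constant:
  fixes F :: "'a::euclidean_space \<Rightarrow> real"
  assumes S: "open S" "bounded S" and I: "finite I" and N: "negligible N"
    and K: "\<And>i. i \<in> I \<Longrightarrow> open (K i)"
    and cover: "\<And>x. x \<in> S \<Longrightarrow> x \<notin> N \<Longrightarrow> \<exists>i\<in>I. x \<in> K i"
    and const: "\<And>i x. i \<in> I \<Longrightarrow> x \<in> K i \<Longrightarrow> F x = c i"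
  shows "F integrable_on S"
proof -
  define U where "U = (\<Union>i\<in>I. K i)"
  have "open (S \<inter> U)" unfolding U_def using S K by (intro open_Int open_UN) auto
  have "F integrable_on (S \<inter> U)"
  proof (rule integrable_on_bounded_continuous[where M="\<Sum>i\<in>I. \<bar>c i\<bar>"])
    show "S \<inter> U \<in> sets lebesgue"
      using \<open>open (S \<inter> U)\<close> S by (intro fmeasurableD lmeasurable_open bounded_Int) auto
    show "bounded (S \<inter> U)" using S by (simp add: bounded_Int)
    have "isCont F x" if x: "x \<in> S \<inter> U" for x
    proof -
      obtain i where i: "i \<in> I" "x \<in> K i" using x unfolding U_def by blast
      have "continuous_on (K i) F"
        by (rule continuous_on_eq[OF continuous_on_const]) (use const i in auto)
      then show ?thesis using continuous_on_eq_continuous_at[OF K[OF i(1)]] i(2) by blast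
    qed
    then show "continuous_on (S \<inter> U) F" by (intro continuous_at_imp_continuous_on) blast
    show "\<bar>F x\<bar> \<le> (\<Sum>i\<in>I. \<bar>c i\<bar>)" if x: "x \<in> S \<inter> U" for x
    proof -
      obtain i where i: "i \<in> I" "x \<in> K i" using x unfolding U_def by blast
      then have "\<bar>F x\<bar> = \<bar>c i\<bar>" using const by simp
      also have "\<dots> \<le> (\<Sum>i\<in>I. \<bar>c i\<bar>)" by (rule member_le_sum) (use i I in auto)
      finally show ?thesis .
    qed
  qed
  then show ?thesis
  proof (rule integrable_spike_set)
    show "negligible {x \<in> S \<inter> U - S. F x \<noteq> 0}"
      by (rule negligible_subset[OF negligible_empty]) blast
    have "{x \<in> S - S \<inter> U. F x \<noteq> 0} \<subseteq> N" using cover unfolding U_def by blast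
    then show "negligible {x \<in> S - S \<inter> U. F x \<noteq> 0}" using N negligible_subset by blast
  qed
qed

lemma Vh_mult_integrable:
  assumes "open \<Omega>" "bounded \<Omega>" "f \<in> Vh \<Omega> T" "g \<in> Vh \<Omega> T"
  shows "(\<lambda>x. f x * g x) integrable_on \<Omega>"
proof -
  have cont: "continuous_on (closure \<Omega>) (\<lambda>x. f x * g x)"
    using assms by (auto simp: Vh_def intro!: continuous_on_mult)
  then have "bounded ((\<lambda>x. f x * g x) ` closure \<Omega>)"
    using assms by (simp add: compact_closure compact_continuous_image compact_imp_bounded)
  then obtain M where M: "\<And>x. x \<in> closure \<Omega> \<Longrightarrow> \<bar>f x * g x\<bar> \<le> M"
    unfolding bounded_iff by auto
  show ?thesis
  proof (rule integrable_on_bounded_continuous[where M=M])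
    show "\<Omega> \<in> sets lebesgue" using assms lmeasurable_open fmeasurableD by blast
    show "continuous_on \<Omega> (\<lambda>x. f x * g x)"
      using cont closure_subset continuous_on_subset by blast
  qed (use assms M closure_subset in auto)
qed

lemma grad_affine:
  assumes "open U" "x \<in> U" "\<And>y. y \<in> U \<Longrightarrow> f y = a \<bullet> y + b"
  shows "grad f x = a"
proof -
  have "((\<lambda>y. a \<bullet> y + b) has_derivative (\<lambda>h. a \<bullet> h)) (at x)"
    by (auto intro!: derivative_eq_intros)
  then have d: "(f has_derivative (\<lambda>h. a \<bullet> h)) (at x)"
    by (rule has_derivative_transform_within_open[OF _ assms(1,2)]) (simp add: assms(3))
  then have "(f has_derivative (\<lambda>h. grad f x \<bullet> h)) (at x)"
    unfolding grad_def by (rule someI_ex[OF exI])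
  from has_derivative_unique[OF this d] have "(\<lambda>h. grad f x \<bullet> h) = (\<lambda>h. a \<bullet> h)" .
  then have "(grad f x - a) \<bullet> (grad f x - a) = 0"
    by (metis inner_diff_left right_minus_eq)
  then show ?thesis by simp
qed

lemma grad_affine_on_triangle:
  assumes "\<forall>x\<in>convex hull \<tau>. h x = a \<bullet> x + b" "x \<in> interior (convex hull \<tau>)"
  shows "grad h x = a"
  using assms interior_subset by (intro grad_affine[where b=b]) auto

definition skeleton :: "pt set set \<Rightarrow> pt set" where
  "skeleton T = (\<Union>\<tau>\<in>T. frontier (convex hull \<tau>))"

lemma negligible_skeleton:
  assumes "conforming_triangulation \<Omega> T"
  shows "negligible (skeleton T)"
  using assms unfolding skeleton_def conforming_triangulation_def
  by (auto intro!: negligible_Union negligible_convex_frontier convex_convex_hull)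

lemma in_triangle_interior_off_skeleton:
  assumes "conforming_triangulation \<Omega> T" "x \<in> \<Omega>" "x \<notin> skeleton T"
  shows "\<exists>\<tau>\<in>T. x \<in> interior (convex hull \<tau>)"
proof -
  have "\<Union>((\<lambda>\<tau>. convex hull \<tau>) ` T) = closure \<Omega>"
    using assms(1) unfolding conforming_triangulation_def by blast
  then obtain \<tau> where "\<tau> \<in> T" "x \<in> convex hull \<tau>" using assms(2) closure_subset by blast
  then show ?thesis
    using assms(3) closure_subset unfolding skeleton_def frontier_def by blast
qed

lemma Vh_grad_inner_integrable:
  assumes "open \<Omega>" "bounded \<Omega>" "conforming_triangulation \<Omega> T"
    and "f \<in> Vh \<Omega> T" "g \<in> Vh \<Omega> T"
  shows "(\<lambda>x. grad f x \<bullet> grad g x) integrable_on \<Omega>"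
proof -
  obtain A B where f: "\<forall>\<tau>\<in>T. \<forall>x\<in>convex hull \<tau>. f x = A \<tau> \<bullet> x + B \<tau>"
    using Vh_affine_pieces[OF assms(4)] .
  obtain C D where g: "\<forall>\<tau>\<in>T. \<forall>x\<in>convex hull \<tau>. g x = C \<tau> \<bullet> x + D \<tau>"
    using Vh_affine_pieces[OF assms(5)] .
  show ?thesis
  proof (rule integrable_on_piecewise_constant
      [where K="\<lambda>\<tau>. interior (convex hull \<tau>)" and N="skeleton T"])
    show "finite T" using assms(3) unfolding conforming_triangulation_def by blast
    show "grad f x \<bullet> grad g x = A \<tau> \<bullet> C \<tau>" if "\<tau> \<in> T" "x \<in> interior (convex hull \<tau>)" for \<tau> x
      using grad_affine_on_triangle[OF f[THEN bspec, OF that(1)] that(2)]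
        grad_affine_on_triangle[OF g[THEN bspec, OF that(1)] that(2)] by simp
  qed (use assms negligible_skeleton in_triangle_interior_off_skeleton in simp_all)
qed

lemma l2ip_comm: "l2ip \<Omega> f g = l2ip \<Omega> g f"
  unfolding l2ip_def by (simp add: mult.commute)

lemma l2ip_grad_comm: "l2ip_grad \<Omega> f g = l2ip_grad \<Omega> g f"
  unfolding l2ip_grad_def by (simp add: inner_commute)

lemma l2ip_diff_right:
  assumes "open \<Omega>" "bounded \<Omega>" "f \<in> Vh \<Omega> T" "g \<in> Vh \<Omega> T" "h \<in> Vh \<Omega> T"
  shows "l2ip \<Omega> f (\<lambda>x. g x - h x) = l2ip \<Omega> f g - l2ip \<Omega> f h"
proof -
  have "l2ip \<Omega> f (\<lambda>x. g x - h x) = integral \<Omega> (\<lambda>x. f x * g x - f x * h x)"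
    unfolding l2ip_def by (simp add: algebra_simps)
  also have "\<dots> = l2ip \<Omega> f g - l2ip \<Omega> f h"
    unfolding l2ip_def by (rule integral_diff) (use Vh_mult_integrable assms in blast)+
  finally show ?thesis .
qed

lemma l2ip_grad_diff_right:
  assumes "open \<Omega>" "bounded \<Omega>" "conforming_triangulation \<Omega> T"
    and "f \<in> Vh \<Omega> T" "g \<in> Vh \<Omega> T" "h \<in> Vh \<Omega> T"
  shows "l2ip_grad \<Omega> f (\<lambda>x. g x - h x) = l2ip_grad \<Omega> f g - l2ip_grad \<Omega> f h"
proof -
  obtain A B where g: "\<forall>\<tau>\<in>T. \<forall>x\<in>convex hull \<tau>. g x = A \<tau> \<bullet> x + B \<tau>"
    using Vh_affine_pieces[OF assms(5)] .
  obtain C D where h: "\<forall>\<tau>\<in>T. \<forall>x\<in>convex hull \<tau>. h x = C \<tau> \<bullet> x + D \<tau>"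
    using Vh_affine_pieces[OF assms(6)] .
  have "integral \<Omega> (\<lambda>x. grad f x \<bullet> grad (\<lambda>y. g y - h y) x)
      = integral \<Omega> (\<lambda>x. grad f x \<bullet> grad g x - grad f x \<bullet> grad h x)"
  proof (rule integral_spike[OF negligible_skeleton[OF assms(3)]])
    fix x assume "x \<in> \<Omega> - skeleton T"
    then obtain \<tau> where \<tau>: "\<tau> \<in> T" "x \<in> interior (convex hull \<tau>)"
      using in_triangle_interior_off_skeleton[OF assms(3)] by blast
    have "\<forall>x\<in>convex hull \<tau>. g x - h x = (A \<tau> - C \<tau>) \<bullet> x + (B \<tau> - D \<tau>)"
      using g h \<tau>(1) by (simp add: inner_diff_left)
    from grad_affine_on_triangle[OF this \<tau>(2)]
      grad_affine_on_triangle[OF g[THEN bspec, OF \<tau>(1)] \<tau>(2)]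
      grad_affine_on_triangle[OF h[THEN bspec, OF \<tau>(1)] \<tau>(2)]
    show "grad f x \<bullet> grad g x - grad f x \<bullet> grad h x = grad f x \<bullet> grad (\<lambda>y. g y - h y) x"
      by (simp add: inner_diff_right)
  qed
  also have "\<dots> = l2ip_grad \<Omega> f g - l2ip_grad \<Omega> f h"
    unfolding l2ip_grad_def
    by (rule integral_diff) (use Vh_grad_inner_integrable assms in blast)+
  finally show ?thesis unfolding l2ip_grad_def .
qed

lemma l2norm_power2:
  assumes "open \<Omega>" "bounded \<Omega>" "f \<in> Vh \<Omega> T"
  shows "(l2norm \<Omega> f)\<^sup>2 = l2ip \<Omega> f f"
proof -
  have "0 \<le> l2ip \<Omega> f f" unfolding l2ip_def
    by (rule integral_nonneg) (use Vh_mult_integrable[OF assms assms(3)] in auto)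
  then show ?thesis unfolding l2norm_def by simp
qed

lemma l2ip_divide_left: "l2ip \<Omega> (\<lambda>x. f x / c) g = l2ip \<Omega> f g / c"
  unfolding l2ip_def by (simp add: mult.commute)

lemma mod_energy_step_identity:
  assumes dom: "open \<Omega>" "bounded \<Omega>" and mesh: "conforming_triangulation \<Omega> T"
    and V: "\<phi> \<in> Vh \<Omega> T" "\<phi>' \<in> Vh \<Omega> T" "\<psi> \<in> Vh \<Omega> T" "\<psi>' \<in> Vh \<Omega> T"
    and scheme1: "\<forall>v\<in>Vh \<Omega> T. l2ip \<Omega> (\<lambda>x. (\<phi>' x - \<phi> x) / dt) v =
       - (\<xi>\<^sup>2 * l2ip \<Omega> \<psi>' v - \<xi>\<^sup>2 * l2ip_grad \<Omega> \<psi>' v + l2ip \<Omega> u v * s')"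
    and scheme2: "\<forall>v\<in>Vh \<Omega> T. l2ip \<Omega> \<psi> v = l2ip \<Omega> \<phi> v - l2ip_grad \<Omega> \<phi> v"
      "\<forall>v\<in>Vh \<Omega> T. l2ip \<Omega> \<psi>' v = l2ip \<Omega> \<phi>' v - l2ip_grad \<Omega> \<phi>' v"
    and scheme3: "s' - s = 1/2 * l2ip \<Omega> u (\<lambda>x. \<phi>' x - \<phi> x)"
  shows "mod_energy \<Omega> \<xi> \<psi>' s' - mod_energy \<Omega> \<xi> \<psi> s =
    - (1 / dt * (l2norm \<Omega> (\<lambda>x. \<phi>' x - \<phi> x))\<^sup>2
       + \<xi>\<^sup>2 / 2 * (l2norm \<Omega> (\<lambda>x. \<psi>' x - \<psi> x))\<^sup>2 + (s' - s)\<^sup>2)"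
proof -
  define a where "a = (\<lambda>x. \<phi>' x - \<phi> x)"
  define b where "b = (\<lambda>x. \<psi>' x - \<psi> x)"
  let ?I = "l2ip \<Omega>" and ?G = "l2ip_grad \<Omega>"
  have aV: "a \<in> Vh \<Omega> T" and bV: "b \<in> Vh \<Omega> T"
    unfolding a_def b_def using V by (simp_all add: Vh_diff)
  have "?I (\<lambda>x. a x / dt) a = - (\<xi>\<^sup>2 * ?I \<psi>' a - \<xi>\<^sup>2 * ?G \<psi>' a + ?I u a * s')"
    using scheme1 aV unfolding a_def by blast
  then have tested: "1 / dt * ?I a a = - (\<xi>\<^sup>2 * (?I \<psi>' a - ?G \<psi>' a) + ?I u a * s')"
    by (simp add: l2ip_divide_left right_diff_distrib)
  have "?I \<psi>' a - ?G \<psi>' a = (?I \<psi>' \<phi>' - ?G \<psi>' \<phi>') - (?I \<psi>' \<phi> - ?G \<psi>' \<phi>)"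
    unfolding a_def
    using l2ip_diff_right[OF dom V(4,2,1)] l2ip_grad_diff_right[OF dom mesh V(4,2,1)] by simp
  also have "\<dots> = ?I \<psi>' \<psi>' - ?I \<psi> \<psi>'"
    using scheme2[THEN bspec, OF V(4)] l2ip_comm[of \<Omega> \<psi>' \<phi>] l2ip_comm[of \<Omega> \<psi>' \<phi>']
      l2ip_grad_comm[of \<Omega> \<psi>' \<phi>] l2ip_grad_comm[of \<Omega> \<psi>' \<phi>']
    by linarith
  finally have gradients_cancel: "?I \<psi>' a - ?G \<psi>' a = ?I \<psi>' \<psi>' - ?I \<psi> \<psi>'" .
  have b_square: "?I b b = ?I \<psi>' \<psi>' - 2 * ?I \<psi> \<psi>' + ?I \<psi> \<psi>"
    using l2ip_diff_right[OF dom bV V(4,3)] l2ip_diff_right[OF dom V(4,4,3)]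
      l2ip_diff_right[OF dom V(3,4,3)] l2ip_comm[of \<Omega> b \<psi>'] l2ip_comm[of \<Omega> b \<psi>]
      l2ip_comm[of \<Omega> \<psi> \<psi>']
    unfolding b_def by linarith
  have "?I u a = 2 * (s' - s)" using scheme3 unfolding a_def by simp
  then have "1 / dt * ?I a a = - (\<xi>\<^sup>2 * (?I \<psi>' \<psi>' - ?I \<psi> \<psi>') + 2 * (s' - s) * s')"
    using tested gradients_cancel by simp
  then show ?thesis
    unfolding mod_energy_def a_def[symmetric] b_def[symmetric]
      l2norm_power2[OF dom aV] l2norm_power2[OF dom bV] l2norm_power2[OF dom V(3)]
      l2norm_power2[OF dom V(4)] b_square
    by (simp add: power2_eq_square algebra_simps)
qed

theorem theorem3p1:
  fixes \<Omega> :: "pt set" and T :: "pt set set"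
    and \<xi> \<alpha> \<gamma> D0 dt :: real
    and phi psi :: "nat \<Rightarrow> pt \<Rightarrow> real" and s :: "nat \<Rightarrow> real"
  assumes dom: "open \<Omega>" "bounded \<Omega>" "convex \<Omega>" "\<Omega> \<noteq> {}"
    and mesh: "conforming_triangulation \<Omega> T"
    and dt: "dt > 0"
    and D0: "\<forall>n. E1 \<Omega> \<alpha> \<gamma> (phi n) + D0 > 0"
    and inV: "\<forall>n. phi n \<in> Vh \<Omega> T \<and> psi n \<in> Vh \<Omega> T"
    and eq1: "\<forall>n. \<forall>v\<in>Vh \<Omega> T.
       l2ip \<Omega> (\<lambda>x. (phi (Suc n) x - phi n x) / dt) v =
       - (\<xi>^2 * l2ip \<Omega> (psi (Suc n)) v - \<xi>^2 * l2ip_grad \<Omega> (psi (Suc n)) v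
          + l2ip \<Omega> (ufun \<Omega> \<alpha> \<gamma> D0 (phi n)) v * s (Suc n))"
    and eq2: "\<forall>n. \<forall>v\<in>Vh \<Omega> T.
       l2ip \<Omega> (psi n) v = l2ip \<Omega> (phi n) v - l2ip_grad \<Omega> (phi n) v"
    and eq3: "\<forall>n. s (Suc n) - s n =
       1/2 * l2ip \<Omega> (ufun \<Omega> \<alpha> \<gamma> D0 (phi n)) (\<lambda>x. phi (Suc n) x - phi n x)"
  shows "\<forall>n.
     mod_energy \<Omega> \<xi> (psi (Suc n)) (s (Suc n)) - mod_energy \<Omega> \<xi> (psi n) (s n) =
       - (1 / dt * (l2norm \<Omega> (\<lambda>x. phi (Suc n) x - phi n x))^2
          + \<xi>^2 / 2 * (l2norm \<Omega> (\<lambda>x. psi (Suc n) x - psi n x))^2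
          + (s (Suc n) - s n)^2)
     \<and> mod_energy \<Omega> \<xi> (psi (Suc n)) (s (Suc n)) - mod_energy \<Omega> \<xi> (psi n) (s n) \<le> 0"
proof
  fix n
  let ?\<Delta>E = "mod_energy \<Omega> \<xi> (psi (Suc n)) (s (Suc n)) - mod_energy \<Omega> \<xi> (psi n) (s n)"
  let ?D = "1 / dt * (l2norm \<Omega> (\<lambda>x. phi (Suc n) x - phi n x))\<^sup>2
    + \<xi>\<^sup>2 / 2 * (l2norm \<Omega> (\<lambda>x. psi (Suc n) x - psi n x))\<^sup>2 + (s (Suc n) - s n)\<^sup>2"
  have "?\<Delta>E = - ?D"
    using inV eq1 eq2 eq3 by (intro mod_energy_step_identity[OF dom(1,2) mesh]) auto
  moreover have "0 \<le> ?D"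
    using dt by (intro add_nonneg_nonneg mult_nonneg_nonneg) auto
  ultimately show "?\<Delta>E = - ?D \<and> ?\<Delta>E \<le> 0" by linarith
qed

end
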